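(* Let $V \subset \mathbb{R}^2$ be a finite point set in general position and $m \in \mathbb{N}$. For each $A \in \{{\rm NW},{\rm NE},{\rm SW},{\rm SE}\}$ the hypergraph $\mathcal{H}(V,\mathcal{R}_A,m)$ admits a hitting set $S_A$ such that: 1. For each $A$, letting $\sigma_A$ be the reflection $\sigma_{\rm NW}=\mathrm{id}$, $\sigma_{\rm NE}(x,y)=(-x,y)$, $\sigma_{\rm SW}(x,y)=(x,-y)$, $\sigma_{\rm SE}(x,y)=(-x,-y)$ (which maps $A$-quadrants to north-west quadrants), the set $X=\sigma_A(S_A)$ is a $2$-shallow hitting set of $\mathcal{H}(\sigma_A(V),\mathcal{R}_{\rm NW},m)$ satisfying, with respect to the point set $\sigma_A(V)$, properties (P) below. 2. Every hyperedge $E \neq E_t(V,m)$ of $\mathcal{H}(V,\mathcal{R}_{\rm NW},m)$ contains at most $2$ / $0$ / $1$ / $1$ points of $S_{\rm NW}$ / $S_{\rm NE}$ / $S_{\rm SW}$ / $S_{\rm SE}$ respectively. 3. Every hyperedge $E \neq E_t(V,m)$ of $\mathcal{H}(V,\mathcal{R}_{\rm NE},m)$ contains at most $0$ / $2$ / $1$ / $1$ points of $S_{\rm NW}$ / $S_{\rm NE}$ / $S_{\rm SW}$ / $S_{\rm SE}$. 4. Every hyperedge $E \neq E_b(V,m)$ of $\mathcal{H}(V,\mathcal{R}_{\rm SW},m)$ contains at most $1$ / $1$ / $2$ / $0$ points of $S_{\rm NW}$ / $S_{\rm NE}$ / $S_{\rm SW}$ / $S_{\rm SE}$. 5. Every hyperedge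 $E \neq E_b(V,m)$ of $\mathcal{H}(V,\mathcal{R}_{\rm SE},m)$ contains at most $1$ / $1$ / $0$ / $2$ points of $S_{\rm NW}$ / $S_{\rm NE}$ / $S_{\rm SW}$ / $S_{\rm SE}$. 6. The set $E_t(V,m)$ contains at most one point of each of $S_{\rm NW}, S_{\rm NE}, S_{\rm SW}, S_{\rm SE}$. 7. The set $E_b(V,m)$ contains at most one point of each of $S_{\rm NW}, S_{\rm NE}, S_{\rm SW}, S_{\rm SE}$. Properties (P) of a set $X$ with respect to a point set $W$: the points $x_1,\dots,x_n$ of $X$ have decreasing $x$- and decreasing $y$-coordinates; (i) $x_1$ is the leftmost of the $m$ topmost points of $W$; (ii) the set of the $m$ topmost points of $W$ contains exactly one point of $X$; (iii) for consecutive $x_j,x_{j+1}$, the set $\{(x,y) : x(x_{j+1}) \leq x \leq x(x_j),\ y \leq y(x_j)\}$ contains at least $m+1$ points of $W$; (iv) for consecutive $x_j,x_{j+1},x_{j+2}$, the axis-aligned rectangle with top-right corner $x_j$ and bottom-left corner $x_{j+2}$ contains at least $m+2$ points of $W$.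
   Context: Quadrant families: $\mathcal{R}_{\rm NW} = \{\{x \leq a, y \geq b\}\}$, $\mathcal{R}_{\rm NE} = \{\{x \geq a, y \geq b\}\}$, $\mathcal{R}_{\rm SW} = \{\{x \leq a, y \leq b\}\}$, $\mathcal{R}_{\rm SE} = \{\{x \geq a, y \leq b\}\}$ over all $a,b \in \mathbb{R}$. $\mathcal{H}(V,\mathcal{R},m)$ is the hypergraph on $V$ whose hyperedges are the sets $V \cap R$, $R \in \mathcal{R}$, of size exactly $m$. $E_t(V,m)$ (resp. $E_b(V,m)$) is the set of the $m$ topmost (resp. bottommost) points of $V$. General position: pairwise distinct $x$-coordinates, $y$-coordinates and values $x+y$. A set $X$ is a $t$-shallow hitting set of a hypergraph if every hyperedge contains at least one and at most $t$ points of $X$; a hitting set means every hyperedge contains at least one point of it. *)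

theory Defs
  imports Main "HOL.Real"
begin

type_synonym pt = "real \<times> real"

datatype quadrant = NW | NE | SW | SE

fun quad_fam :: "quadrant \<Rightarrow> pt set set" where
  "quad_fam NW = {{p. fst p \<le> a \<and> snd p \<ge> b} | a b. True}"
| "quad_fam NE = {{p. fst p \<ge> a \<and> snd p \<ge> b} | a b. True}"
| "quad_fam SW = {{p. fst p \<le> a \<and> snd p \<le> b} | a b. True}"
| "quad_fam SE = {{p. fst p \<ge> a \<and> snd p \<le> b} | a b. True}"

fun sigma :: "quadrant \<Rightarrow> pt \<Rightarrow> pt" where
  "sigma NW (x, y) = (x, y)"
| "sigma NE (x, y) = (- x, y)"
| "sigma SW (x, y) = (x, - y)"
| "sigma SE (x, y) = (- x, - y)"

definition hyperedges :: "pt set \<Rightarrow> pt set set \<Rightarrow> nat \<Rightarrow> pt set set" where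
  "hyperedges V Rs m = {V \<inter> R | R. R \<in> Rs \<and> card (V \<inter> R) = m}"

definition general_position :: "pt set \<Rightarrow> bool" where
  "general_position V \<longleftrightarrow> inj_on fst V \<and> inj_on snd V \<and> inj_on (\<lambda>p. fst p + snd p) V"

definition E_t :: "pt set \<Rightarrow> nat \<Rightarrow> pt set" where
  "E_t V m = {p \<in> V. card {q \<in> V. snd q > snd p} < m}"

definition E_b :: "pt set \<Rightarrow> nat \<Rightarrow> pt set" where
  "E_b V m = {p \<in> V. card {q \<in> V. snd q < snd p} < m}"

definition hitting_set :: "pt set \<Rightarrow> pt set set \<Rightarrow> pt set \<Rightarrow> bool" where
  "hitting_set V E S \<longleftrightarrow> S \<subseteq> V \<and> (\<forall>e\<in>E. S \<inter> e \<noteq> {})"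

definition shallow_hitting_set :: "nat \<Rightarrow> pt set \<Rightarrow> pt set set \<Rightarrow> pt set \<Rightarrow> bool" where
  "shallow_hitting_set t V E S \<longleftrightarrow> S \<subseteq> V \<and> (\<forall>e\<in>E. 1 \<le> card (S \<inter> e) \<and> card (S \<inter> e) \<le> t)"

definition props_P :: "nat \<Rightarrow> pt set \<Rightarrow> pt set \<Rightarrow> bool" where
  "props_P m W X \<longleftrightarrow>
    (\<exists>xs. set xs = X \<and> distinct xs \<and>
       sorted_wrt (\<lambda>p q. fst p > fst q \<and> snd p > snd q) xs \<and>
       \<comment> \<open>(i)\<close>
       (xs \<noteq> [] \<and> hd xs \<in> E_t W m \<and> (\<forall>q \<in> E_t W m. fst (hd xs) \<le> fst q)) \<and>
       \<comment> \<open>(ii)\<close>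
       card (X \<inter> E_t W m) = 1 \<and>
       \<comment> \<open>(iii)\<close>
       (\<forall>j. j + 1 < length xs \<longrightarrow>
          card {w \<in> W. fst (xs ! (j+1)) \<le> fst w \<and> fst w \<le> fst (xs ! j)
                        \<and> snd w \<le> snd (xs ! j)} \<ge> m + 1) \<and>
       \<comment> \<open>(iv)\<close>
       (\<forall>j. j + 2 < length xs \<longrightarrow>
          card {w \<in> W. fst (xs ! (j+2)) \<le> fst w \<and> fst w \<le> fst (xs ! j)
                        \<and> snd (xs ! (j+2)) \<le> snd w \<and> snd w \<le> snd (xs ! j)} \<ge> m + 2))"

end

(* Reflecting by sigma A turns A-quadrants into NW-quadrants, so it suffices to construct one
   set X(W) for every finite W and to take S A = sigma A ` X(sigma A ` V).  X(W) is a greedy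
   chain: its first point is the leftmost of the m topmost points of W, and each further point
   is the leftmost of the m topmost points strictly to the left of the previous one, as long as
   at least m such points remain.  A point to the left of a chain point x lies below all the
   m topmost points among which x was chosen.  Hence a non-final chain point x and the m points
   among which its successor was chosen give m + 1 points in every SW-quadrant containing x and
   in every SE-quadrant containing x and a later chain point, and chain points two steps apart
   span a box with m + 2 points.  As hyperedges have exactly m points, this bounds the number
   of chain points in each kind of quadrant. *)

theory Submission
  imports Defs
begin

section \<open>Topmost points\<close>

definition left_of :: "pt set \<Rightarrow> pt \<Rightarrow> pt set" where
  "left_of P p = {w \<in> P. fst w < fst p}"

definition top_leftmost :: "nat \<Rightarrow> pt set \<Rightarrow> pt" where
  "top_leftmost m P = arg_min_on fst (E_t P m)"

lemma E_t_subset: "E_t P m \<subseteq> P"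
  unfolding E_t_def by auto

lemma below_E_t:
  assumes "finite P" "t \<in> E_t P m" "w \<in> P" "w \<notin> E_t P m"
  shows "snd w < snd t"
proof (rule ccontr)
  assume "\<not> snd w < snd t"
  then have "{q \<in> P. snd q > snd w} \<subseteq> {q \<in> P. snd q > snd t}" by auto
  then have "card {q \<in> P. snd q > snd w} \<le> card {q \<in> P. snd q > snd t}"
    using assms(1) by (intro card_mono) auto
  then show False using assms(2-4) unfolding E_t_def by auto
qed

text \<open>Only points of \<open>E_t P m\<close> lie above the topmost point outside \<open>E_t P m\<close>.\<close>
lemma card_E_t_ge:
  assumes "finite P" "m \<le> card P"
  shows "m \<le> card (E_t P m)"
proof (rule ccontr)
  assume small: "\<not> m \<le> card (E_t P m)"
  define D where "D = P - E_t P m"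
  have "finite D" using assms(1) unfolding D_def by simp
  moreover have "D \<noteq> {}"
    using small assms(2) E_t_subset[of P m] unfolding D_def by (metis Diff_eq_empty_iff subset_antisym)
  ultimately obtain w where w: "w \<in> D" "snd w = Max (snd ` D)"
  proof -
    have "Max (snd ` D) \<in> snd ` D" using \<open>finite D\<close> \<open>D \<noteq> {}\<close> by simp
    then show thesis using that by force
  qed
  have "{q \<in> P. snd q > snd w} \<subseteq> E_t P m"
  proof
    fix q assume q: "q \<in> {q \<in> P. snd q > snd w}"
    have "q \<notin> D"
    proof
      assume "q \<in> D"
      then have "snd q \<le> Max (snd ` D)" using \<open>finite D\<close> by simp
      then show False using q w(2) by simp
    qed
    then show "q \<in> E_t P m" using q unfolding D_def by blast
  qed
  then have "card {q \<in> P. snd q > snd w} \<le> card (E_t P m)"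
    by (rule card_mono[OF finite_subset[OF E_t_subset assms(1)]])
  moreover have "m \<le> card {q \<in> P. snd q > snd w}"
    using w(1) unfolding D_def E_t_def by (simp add: not_less)
  ultimately show False using small by simp
qed

lemma E_t_nonempty:
  assumes "finite P" "P \<noteq> {}" "0 < m"
  shows "E_t P m \<noteq> {}"
proof -
  have "1 \<le> card (E_t P 1)"
    using assms(1,2) by (intro card_E_t_ge) (auto simp: Suc_le_eq card_gt_0_iff)
  moreover have "E_t P 1 \<subseteq> E_t P m"
    using assms(3) unfolding E_t_def by auto
  ultimately show ?thesis by auto
qed

lemma top_leftmost_in_E_t:
  assumes "finite P" "P \<noteq> {}" "0 < m"
  shows "top_leftmost m P \<in> E_t P m"
  unfolding top_leftmost_def
  by (rule arg_min_if_finite(1)) (use E_t_nonempty[OF assms] finite_subset[OF E_t_subset assms(1)] in auto)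

lemma top_leftmost_le:
  assumes "finite P" "q \<in> E_t P m"
  shows "fst (top_leftmost m P) \<le> fst q"
  unfolding top_leftmost_def
  by (rule arg_min_least) (use finite_subset[OF E_t_subset assms(1)] assms(2) in auto)

lemma left_of_top_leftmost_below:
  assumes "finite P" "P \<noteq> {}" "0 < m" "w \<in> left_of P (top_leftmost m P)" "t \<in> E_t P m"
  shows "snd w < snd t"
proof -
  have "w \<notin> E_t P m"
    using assms(4) top_leftmost_le[OF assms(1), of w m] unfolding left_of_def by auto
  then show ?thesis
    using below_E_t[OF assms(1,5)] assms(4) unfolding left_of_def by blast
qed

lemma hyperedge_subset: "e \<in> hyperedges V Rs m \<Longrightarrow> e \<subseteq> V"
  unfolding hyperedges_def by auto

lemma card_le_if_subset_hyperedge: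
  assumes "finite V" "e \<in> hyperedges V Rs m" "S \<subseteq> e"
  shows "card S \<le> m"
proof -
  have "card S \<le> card e"
    using assms finite_subset[OF hyperedge_subset] by (intro card_mono) auto
  then show ?thesis using assms(2) unfolding hyperedges_def by auto
qed

lemma card_E_t_ge_if_hyperedge:
  assumes "finite V" "e \<in> hyperedges V Rs m"
  shows "m \<le> card (E_t V m)"
proof (rule card_E_t_ge[OF assms(1)])
  have "card e \<le> card V"
    using assms hyperedge_subset by (intro card_mono) auto
  then show "m \<le> card V" using assms(2) unfolding hyperedges_def by auto
qed

section \<open>The greedy chain\<close>

function greedy_chain :: "nat \<Rightarrow> pt set \<Rightarrow> pt list" where
  "greedy_chain m P =
     (if finite P \<and> P \<noteq> {} \<and> 0 < m then
        top_leftmost m P #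
          (if m \<le> card (left_of P (top_leftmost m P))
           then greedy_chain m (left_of P (top_leftmost m P)) else [])
      else [])"
  by pat_completeness auto
termination
proof (relation "measure (\<lambda>(m, P). card P)")
  fix m :: nat and P :: "pt set"
  assume P: "finite P \<and> P \<noteq> {} \<and> 0 < m"
  then have "top_leftmost m P \<in> P"
    using top_leftmost_in_E_t E_t_subset by blast
  then have "left_of P (top_leftmost m P) \<subset> P"
    unfolding left_of_def by auto
  then show "((m, left_of P (top_leftmost m P)), m, P) \<in> measure (\<lambda>(m, P). card P)"
    using P by (simp add: psubset_card_mono)
qed simp

declare greedy_chain.simps [simp del]

lemma greedy_chain_ConsD:
  assumes "greedy_chain m P = x # xs"
  shows "finite P" "P \<noteq> {}" "0 < m" "x = top_leftmost m P"
    and "xs = (if m \<le> card (left_of P x) then greedy_chain m (left_of P x) else [])"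
proof -
  have P: "finite P \<and> P \<noteq> {} \<and> 0 < m"
    using assms greedy_chain.simps[of m P] by (metis list.distinct(1))
  then show "finite P" "P \<noteq> {}" "0 < m" by simp_all
  show x: "x = top_leftmost m P"
    using assms greedy_chain.simps[of m P] P by simp
  show "xs = (if m \<le> card (left_of P x) then greedy_chain m (left_of P x) else [])"
    using assms greedy_chain.simps[of m P] P unfolding x[symmetric] by simp
qed

lemma greedy_chain_nonempty:
  "finite P \<Longrightarrow> P \<noteq> {} \<Longrightarrow> 0 < m \<Longrightarrow> greedy_chain m P \<noteq> []"
  by (simp add: greedy_chain.simps)

lemma greedy_chain_subset_sorted:
  "finite P \<Longrightarrow> set (greedy_chain m P) \<subseteq> P \<and>
     sorted_wrt (\<lambda>p q. fst q < fst p \<and> snd q < snd p) (greedy_chain m P)"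
proof (induction m P rule: greedy_chain.induct)
  case (1 m P)
  show ?case
  proof (cases "greedy_chain m P")
    case (Cons x xs)
    note x = greedy_chain_ConsD[OF Cons]
    have IH: "set xs \<subseteq> left_of P x \<and> sorted_wrt (\<lambda>p q. fst q < fst p \<and> snd q < snd p) xs"
      using "1.IH" x "1.prems" unfolding left_of_def by auto
    have x_in: "x \<in> E_t P m"
      using top_leftmost_in_E_t[OF x(1-3)] x(4) by simp
    have "fst q < fst x \<and> snd q < snd x" if "q \<in> set xs" for q
    proof -
      have "q \<in> left_of P (top_leftmost m P)" using IH that x(4) by auto
      then show ?thesis
        using left_of_top_leftmost_below[OF x(1-3) _ x_in] x(4) unfolding left_of_def by auto
    qed
    then show ?thesis
      using Cons IH x_in E_t_subset[of P m] unfolding left_of_def by auto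
  qed simp
qed

text \<open>Otherwise all \<open>m\<close> points of the quadrant would lie above a point of \<open>E_t P m\<close>.\<close>
lemma NW_quadrant_missing_top_leftmost:
  assumes "finite P" "P \<noteq> {}" "0 < m" "card (P \<inter> {p. fst p \<le> a \<and> b \<le> snd p}) = m"
    and "top_leftmost m P \<notin> {p. fst p \<le> a \<and> b \<le> snd p}"
  shows "a < fst (top_leftmost m P)"
proof (rule ccontr)
  let ?x = "top_leftmost m P"
  assume "\<not> a < fst ?x"
  then have "P \<inter> {p. fst p \<le> a \<and> b \<le> snd p} \<subseteq> {q \<in> P. snd q > snd ?x}"
    using assms(5) by auto
  then have "m \<le> card {q \<in> P. snd q > snd ?x}"
    using assms(1,4) card_mono[of "{q \<in> P. snd q > snd ?x}"] by fastforce
  then show False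
    using top_leftmost_in_E_t[OF assms(1-3)] unfolding E_t_def by simp
qed

lemma greedy_chain_hits_NW_quadrant:
  assumes "finite P" "0 < m" "card (P \<inter> {p. fst p \<le> a \<and> b \<le> snd p}) = m"
  shows "set (greedy_chain m P) \<inter> {p. fst p \<le> a \<and> b \<le> snd p} \<noteq> {}"
  using assms
proof (induction m P rule: greedy_chain.induct)
  case (1 m P)
  let ?Q = "{p. fst p \<le> a \<and> b \<le> snd p}"
  have P: "finite P" "P \<noteq> {}" "0 < m"
    using "1.prems" by auto
  define x where "x = top_leftmost m P"
  have chain: "greedy_chain m P =
      x # (if m \<le> card (left_of P x) then greedy_chain m (left_of P x) else [])"
    using P unfolding x_def by (simp add: greedy_chain.simps)
  show ?case
  proof (cases "x \<in> ?Q")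
    case False
    then have "left_of P x \<inter> ?Q = P \<inter> ?Q"
      using NW_quadrant_missing_top_leftmost[OF P "1.prems"(3)] unfolding x_def left_of_def by auto
    moreover have "card (P \<inter> ?Q) \<le> card (left_of P x)"
      unfolding calculation[symmetric] using P(1) by (intro card_mono) (auto simp: left_of_def)
    ultimately have "m \<le> card (left_of P x)"
      and "set (greedy_chain m (left_of P x)) \<inter> ?Q \<noteq> {}"
      using "1.IH"[folded x_def] P "1.prems"(3) by (simp_all add: left_of_def)
    then show ?thesis using chain by auto
  qed (use chain in auto)
qed

locale greedy_chain_of =
  fixes W :: "pt set" and m :: nat
  assumes finite_W: "finite W" and W_nonempty: "W \<noteq> {}" and m_pos: "0 < m"
begin

abbreviation chain :: "pt list" where
  "chain \<equiv> greedy_chain m W"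

primrec region :: "nat \<Rightarrow> pt set" where
  "region 0 = W"
| "region (Suc j) = left_of (region j) (chain ! j)"

definition tops :: "nat \<Rightarrow> pt set" where
  "tops j = E_t (region j) m"

lemma region_subset: "region j \<subseteq> W"
  by (induction j) (auto simp: left_of_def)

lemma finite_region: "finite (region j)"
  using finite_subset[OF region_subset finite_W] .

lemma drop_chain: "j < length chain \<Longrightarrow> drop j chain = greedy_chain m (region j)"
proof (induction j)
  case (Suc j)
  then have "greedy_chain m (region j) = chain ! j # drop (Suc j) chain"
    by (simp add: Cons_nth_drop_Suc)
  from greedy_chain_ConsD(5)[OF this]
  have "drop (Suc j) chain =
      (if m \<le> card (region (Suc j)) then greedy_chain m (region (Suc j)) else [])"
    by simp
  moreover have "drop (Suc j) chain \<noteq> []"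
    using Suc.prems by simp
  ultimately show ?case
    by (simp split: if_splits)
qed simp

lemma greedy_chain_region:
  "j < length chain \<Longrightarrow> greedy_chain m (region j) = chain ! j # drop (Suc j) chain"
  using drop_chain by (simp add: Cons_nth_drop_Suc)

lemma chain_nth:
  assumes "j < length chain"
  shows "chain ! j = top_leftmost m (region j)" "region j \<noteq> {}"
proof -
  from greedy_chain_ConsD[OF greedy_chain_region[OF assms]]
  show "chain ! j = top_leftmost m (region j)" "region j \<noteq> {}" by simp_all
qed

lemma Suc_less_length_chain_iff:
  assumes "j < length chain"
  shows "Suc j < length chain \<longleftrightarrow> m \<le> card (region (Suc j))"
proof -
  from greedy_chain_ConsD(5)[OF greedy_chain_region[OF assms]]
  have drop: "drop (Suc j) chain =
      (if m \<le> card (region (Suc j)) then greedy_chain m (region (Suc j)) else [])"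
    by simp
  show ?thesis
  proof
    assume "Suc j < length chain"
    then show "m \<le> card (region (Suc j))" using drop by (auto split: if_splits)
  next
    assume card: "m \<le> card (region (Suc j))"
    then have "region (Suc j) \<noteq> {}" using m_pos by auto
    then have "drop (Suc j) chain \<noteq> []"
      using drop card greedy_chain_nonempty[OF finite_region[of "Suc j"] _ m_pos] by simp
    then show "Suc j < length chain" by simp
  qed
qed

lemma length_chain_pos: "0 < length chain"
  using greedy_chain_nonempty[OF finite_W W_nonempty m_pos] by simp

lemma chain_subset: "set chain \<subseteq> W"
  and chain_sorted: "sorted_wrt (\<lambda>p q. fst q < fst p \<and> snd q < snd p) chain"
  using greedy_chain_subset_sorted[OF finite_W] by auto

lemma chain_nth_in_W: "j < length chain \<Longrightarrow> chain ! j \<in> W"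
  using chain_subset by auto

lemma chain_decreasing:
  "i < j \<Longrightarrow> j < length chain \<Longrightarrow> fst (chain ! j) < fst (chain ! i) \<and> snd (chain ! j) < snd (chain ! i)"
  using chain_sorted by (simp add: sorted_wrt_iff_nth_less)

lemma chain_antimono:
  "i \<le> j \<Longrightarrow> j < length chain \<Longrightarrow> fst (chain ! j) \<le> fst (chain ! i) \<and> snd (chain ! j) \<le> snd (chain ! i)"
  using chain_decreasing[of i j] by (cases "i = j") auto

lemma region_Suc_eq: "j < length chain \<Longrightarrow> region (Suc j) = left_of W (chain ! j)"
proof (induction j)
  case (Suc j)
  have "fst (chain ! Suc j) < fst (chain ! j)"
    using chain_decreasing[of j "Suc j"] Suc.prems by simp
  have "region (Suc (Suc j)) = left_of (left_of W (chain ! j)) (chain ! Suc j)"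
    using Suc by simp
  also have "\<dots> = left_of W (chain ! Suc j)"
    using \<open>fst (chain ! Suc j) < fst (chain ! j)\<close> by (auto simp: left_of_def)
  finally show ?case .
qed simp

lemma chain_in_tops: "j < length chain \<Longrightarrow> chain ! j \<in> tops j"
  unfolding tops_def using chain_nth top_leftmost_in_E_t[OF finite_region _ m_pos] by simp

lemma chain_leftmost_in_tops: "j < length chain \<Longrightarrow> t \<in> tops j \<Longrightarrow> fst (chain ! j) \<le> fst t"
  unfolding tops_def using chain_nth top_leftmost_le[OF finite_region] by simp

lemma left_below_tops:
  assumes "j < length chain" "w \<in> W" "fst w < fst (chain ! j)" "t \<in> tops j"
  shows "snd w < snd t"
proof -
  have "w \<in> region j"
  proof (cases j)
    case (Suc i)
    then have "fst (chain ! j) < fst (chain ! i)"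
      using chain_decreasing[of i j] assms(1) by simp
    then show ?thesis
      using assms(1-3) Suc region_Suc_eq[of i] by (simp add: left_of_def)
  qed (use assms(2) in simp)
  then show ?thesis
    using left_of_top_leftmost_below[OF finite_region chain_nth(2)[OF assms(1)] m_pos]
      assms chain_nth(1) unfolding tops_def left_of_def by simp
qed

lemma card_tops_Suc: "Suc j < length chain \<Longrightarrow> m \<le> card (tops (Suc j))"
proof -
  assume "Suc j < length chain"
  then have "m \<le> card (region (Suc j))"
    using Suc_less_length_chain_iff[of j] by simp
  then show ?thesis
    unfolding tops_def by (rule card_E_t_ge[OF finite_region])
qed

lemma tops_Suc_between:
  assumes "Suc j < length chain" "t \<in> tops (Suc j)"
  shows "t \<in> W" "fst (chain ! Suc j) \<le> fst t" "fst t < fst (chain ! j)" "snd t < snd (chain ! j)"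
proof -
  have "t \<in> left_of W (chain ! j)"
    using assms E_t_subset region_Suc_eq[of j] unfolding tops_def by auto
  then show "t \<in> W" "fst t < fst (chain ! j)"
    unfolding left_of_def by simp_all
  then show "snd t < snd (chain ! j)"
    using left_below_tops[of j t "chain ! j"] chain_in_tops[of j] assms(1) by simp
  show "fst (chain ! Suc j) \<le> fst t"
    using chain_leftmost_in_tops assms by simp
qed

lemma finite_tops: "finite (tops j)"
  unfolding tops_def using finite_subset[OF E_t_subset finite_region] .

lemma chain_notin_tops_Suc: "Suc j < length chain \<Longrightarrow> chain ! j \<notin> tops (Suc j)"
  using tops_Suc_between(3) by blast

lemma card_strip_ge:
  assumes "Suc j < length chain"
  shows "m + 1 \<le> card {w \<in> W. fst (chain ! Suc j) \<le> fst w \<and> fst w \<le> fst (chain ! j)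
                                 \<and> snd w \<le> snd (chain ! j)}"
    (is "_ \<le> card ?S")
proof -
  have "m + 1 \<le> card (insert (chain ! j) (tops (Suc j)))"
    using card_tops_Suc[OF assms] chain_notin_tops_Suc[OF assms] finite_tops by simp
  also have "\<dots> \<le> card ?S"
  proof (rule card_mono)
    show "insert (chain ! j) (tops (Suc j)) \<subseteq> ?S"
      using tops_Suc_between[OF assms] chain_nth_in_W[of j] chain_decreasing[of j "Suc j"] assms
      by fastforce
  qed (simp add: finite_W)
  finally show ?thesis .
qed

lemma card_box_ge:
  assumes "Suc (Suc j) < length chain"
  shows "m + 2 \<le> card {w \<in> W. fst (chain ! Suc (Suc j)) \<le> fst w \<and> fst w \<le> fst (chain ! j)
                         \<and> snd (chain ! Suc (Suc j)) \<le> snd w \<and> snd w \<le> snd (chain ! j)}"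
    (is "_ \<le> card ?B")
proof -
  let ?z = "chain ! Suc (Suc j)"
  have j: "Suc j < length chain" using assms by simp
  have z: "?z \<in> W" "fst ?z < fst (chain ! Suc j)" "fst ?z < fst (chain ! j)" "snd ?z < snd (chain ! j)"
    using chain_nth_in_W[OF assms] chain_decreasing[of "Suc j" "Suc (Suc j)"]
      chain_decreasing[of j "Suc (Suc j)"] assms by auto
  have above_z: "snd ?z < snd t" if "t \<in> tops (Suc j)" for t
    using left_below_tops[OF j z(1,2) that] .
  have "?z \<notin> tops (Suc j)" using above_z by blast
  moreover have "chain ! j \<notin> insert ?z (tops (Suc j))"
    using chain_notin_tops_Suc[OF j] z(3) by auto
  ultimately have "m + 2 \<le> card (insert (chain ! j) (insert ?z (tops (Suc j))))"
    using card_tops_Suc[OF j] finite_tops by simp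
  also have "\<dots> \<le> card ?B"
  proof (rule card_mono)
    show "insert (chain ! j) (insert ?z (tops (Suc j))) \<subseteq> ?B"
      using tops_Suc_between[OF j] chain_nth_in_W[of j] z above_z j by fastforce
  qed (simp add: finite_W)
  finally show ?thesis .
qed

lemma chain_0_in_E_t: "chain ! 0 \<in> E_t W m"
  using chain_in_tops[OF length_chain_pos] unfolding tops_def by simp

lemma chain_0_leftmost: "q \<in> E_t W m \<Longrightarrow> fst (chain ! 0) \<le> fst q"
  using chain_leftmost_in_tops[OF length_chain_pos] unfolding tops_def by simp

lemma chain_Int_E_t: "set chain \<inter> E_t W m = {chain ! 0}"
proof -
  have "chain ! j \<notin> E_t W m" if "0 < j" "j < length chain" for j
    using chain_0_leftmost[of "chain ! j"] chain_decreasing[of 0 j] that by fastforce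
  then have "set chain \<inter> E_t W m \<subseteq> {chain ! 0}"
    by (auto simp: in_set_conv_nth) (metis gr0I)
  then show ?thesis
    using chain_0_in_E_t nth_mem[OF length_chain_pos] by blast
qed

lemma chain_props_P: "props_P m W (set chain)"
  unfolding props_P_def
proof (intro exI conjI)
  show "distinct chain"
    using chain_decreasing by (fastforce simp: distinct_conv_nth neq_iff)
  show "sorted_wrt (\<lambda>p q. fst q < fst p \<and> snd q < snd p) chain"
    by (rule chain_sorted)
  show "chain \<noteq> []"
    using length_chain_pos by simp
  have hd: "hd chain = chain ! 0"
    using length_chain_pos by (simp add: hd_conv_nth)
  show "hd chain \<in> E_t W m"
    using chain_0_in_E_t unfolding hd .
  show "\<forall>q\<in>E_t W m. fst (hd chain) \<le> fst q"
    using chain_0_leftmost unfolding hd by blast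
  show "card (set chain \<inter> E_t W m) = 1"
    using chain_Int_E_t by simp
  show "\<forall>j. j + 1 < length chain \<longrightarrow> m + 1 \<le> card {w \<in> W. fst (chain ! (j + 1)) \<le> fst w
          \<and> fst w \<le> fst (chain ! j) \<and> snd w \<le> snd (chain ! j)}"
    using card_strip_ge by simp
  show "\<forall>j. j + 2 < length chain \<longrightarrow> m + 2 \<le> card {w \<in> W. fst (chain ! (j + 2)) \<le> fst w
          \<and> fst w \<le> fst (chain ! j) \<and> snd (chain ! (j + 2)) \<le> snd w \<and> snd w \<le> snd (chain ! j)}"
    using card_box_ge by (simp add: numeral_2_eq_2)
qed simp

end

section \<open>Chain points in quadrants with \<open>m\<close> points\<close>

fun extreme_points :: "quadrant \<Rightarrow> pt set \<Rightarrow> nat \<Rightarrow> pt set" where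
  "extreme_points NW = E_t"
| "extreme_points NE = E_t"
| "extreme_points SW = E_b"
| "extreme_points SE = E_b"

fun chain_bound :: "quadrant \<Rightarrow> nat" where
  "chain_bound NW = 2"
| "chain_bound NE = 0"
| "chain_bound SW = 1"
| "chain_bound SE = 1"

context greedy_chain_of
begin

lemma card_chain_Int_le_1:
  assumes "\<And>i k. i < k \<Longrightarrow> k < length chain \<Longrightarrow> chain ! i \<in> X \<Longrightarrow> chain ! k \<in> X \<Longrightarrow> False"
  shows "card (set chain \<inter> X) \<le> 1"
proof -
  have "p = q" if p: "p \<in> set chain \<inter> X" and q: "q \<in> set chain \<inter> X" for p q
  proof -
    obtain i where "i < length chain" "chain ! i = p"
      using p by (meson IntD1 in_set_conv_nth)
    moreover obtain k where "k < length chain" "chain ! k = q"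
      using q by (meson IntD1 in_set_conv_nth)
    ultimately show ?thesis
      using assms[of i k] assms[of k i] p q by (cases i k rule: linorder_cases) auto
  qed
  then show ?thesis
    by (simp add: card_le_Suc0_iff_eq)
qed

lemma chain_hits_NW:
  assumes "e \<in> hyperedges W (quad_fam NW) m"
  shows "set chain \<inter> e \<noteq> {}"
proof -
  obtain a b where e: "e = W \<inter> {p. fst p \<le> a \<and> b \<le> snd p}" "card e = m"
    using assms unfolding hyperedges_def by auto
  then show ?thesis
    using greedy_chain_hits_NW_quadrant[OF finite_W m_pos, of a b] chain_subset by auto
qed

text \<open>Two chain points of a NW-quadrant that are not consecutive span a box with \<open>m + 2\<close> points.\<close>
lemma chain_in_NW_hyperedge_le_Suc:
  assumes "e \<in> hyperedges W (quad_fam NW) m"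
    and "i \<le> k" "k < length chain" "chain ! i \<in> e" "chain ! k \<in> e"
  shows "k \<le> Suc i"
proof (rule ccontr)
  obtain a b where e: "e = W \<inter> {p. fst p \<le> a \<and> b \<le> snd p}" "card e = m"
    using assms(1) unfolding hyperedges_def by auto
  assume "\<not> k \<le> Suc i"
  then have k: "Suc (Suc i) \<le> k" "Suc (Suc i) < length chain" using assms(3) by auto
  let ?B = "{w \<in> W. fst (chain ! Suc (Suc i)) \<le> fst w \<and> fst w \<le> fst (chain ! i)
               \<and> snd (chain ! Suc (Suc i)) \<le> snd w \<and> snd w \<le> snd (chain ! i)}"
  have "snd (chain ! k) \<le> snd (chain ! Suc (Suc i))"
    using chain_antimono[OF k(1) assms(3)] by simp
  then have "?B \<subseteq> e" using assms(4,5) e by auto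
  then have "card ?B \<le> m" by (rule card_le_if_subset_hyperedge[OF finite_W assms(1)])
  then show False using card_box_ge[OF k(2)] by simp
qed

lemma card_chain_Int_NW_le:
  assumes "e \<in> hyperedges W (quad_fam NW) m"
  shows "card (set chain \<inter> e) \<le> 2"
proof (cases "set chain \<inter> e = {}")
  case False
  define i where "i = (LEAST i. i < length chain \<and> chain ! i \<in> e)"
  have ex: "\<exists>i. i < length chain \<and> chain ! i \<in> e"
    using False by (metis disjoint_iff in_set_conv_nth)
  have i: "i < length chain" "chain ! i \<in> e"
    using LeastI_ex[OF ex] unfolding i_def by auto
  have "set chain \<inter> e \<subseteq> {chain ! i, chain ! Suc i}"
  proof
    fix q assume "q \<in> set chain \<inter> e"
    then obtain k where k: "k < length chain" "q = chain ! k" "chain ! k \<in> e"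
      by (auto simp: in_set_conv_nth)
    have "i \<le> k" unfolding i_def using k by (auto intro: Least_le)
    then have "k = i \<or> k = Suc i"
      using chain_in_NW_hyperedge_le_Suc[OF assms _ k(1) i(2) k(3)] by auto
    then show "q \<in> {chain ! i, chain ! Suc i}" using k(2) by auto
  qed
  then have "card (set chain \<inter> e) \<le> card {chain ! i, chain ! Suc i}"
    by (intro card_mono) auto
  also have "\<dots> \<le> 2" by (simp add: card_insert_le_m1)
  finally show ?thesis .
qed simp

lemma chain_shallow_hitting_set:
  "shallow_hitting_set 2 W (hyperedges W (quad_fam NW) m) (set chain)"
  unfolding shallow_hitting_set_def
  using chain_subset chain_hits_NW card_chain_Int_NW_le
  by (auto simp: Suc_le_eq card_gt_0_iff)

text \<open>The leftmost point of \<open>E_t W m\<close> can only lie in a NE-quadrant with \<open>m\<close> points if that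
  quadrant contains all of \<open>E_t W m\<close>.\<close>
lemma chain_0_notin_NE_hyperedge:
  assumes "e \<in> hyperedges W (quad_fam NE) m" "e \<noteq> E_t W m"
  shows "chain ! 0 \<notin> e"
proof
  assume in_e: "chain ! 0 \<in> e"
  obtain a b where e: "e = W \<inter> {p. a \<le> fst p \<and> b \<le> snd p}" "card e = m"
    using assms(1) unfolding hyperedges_def by auto
  have "\<not> E_t W m \<subseteq> e"
  proof
    assume "E_t W m \<subseteq> e"
    then have "E_t W m = e"
      using card_seteq[of e] card_E_t_ge_if_hyperedge[OF finite_W assms(1)] e finite_W by simp
    then show False using assms(2) by simp
  qed
  then obtain u where u: "u \<in> E_t W m" "u \<notin> e" by blast
  have "b \<le> snd u"
  proof (rule ccontr)
    assume "\<not> b \<le> snd u"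
    then have "e \<subseteq> {q \<in> W. snd q > snd u}" using e by auto
    then have "card e \<le> card {q \<in> W. snd q > snd u}"
      using finite_W by (intro card_mono) auto
    then show False using u(1) e(2) unfolding E_t_def by simp
  qed
  moreover have "u \<in> W" using u(1) E_t_subset[of W m] by blast
  ultimately have "fst u < fst (chain ! 0)"
    using u(2) in_e e(1) by auto
  then show False using chain_0_leftmost[OF u(1)] by simp
qed

text \<open>A later chain point of a NE-quadrant would lie below and left of all of \<open>E_t W m\<close>,
  which would then be contained in the quadrant as well.\<close>
lemma chain_notin_NE_hyperedge:
  assumes "e \<in> hyperedges W (quad_fam NE) m" "0 < j" "j < length chain"
  shows "chain ! j \<notin> e"
proof
  assume in_e: "chain ! j \<in> e"
  obtain a b where e: "e = W \<inter> {p. a \<le> fst p \<and> b \<le> snd p}" "card e = m"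
    using assms(1) unfolding hyperedges_def by auto
  have left: "fst (chain ! j) < fst (chain ! 0)"
    using chain_decreasing[of 0 j] assms(2,3) by simp
  have "E_t W m \<subseteq> e"
  proof
    fix t assume t: "t \<in> E_t W m"
    have "snd (chain ! j) < snd t"
      using left_below_tops[OF length_chain_pos chain_nth_in_W[OF assms(3)] left] t
      unfolding tops_def by simp
    moreover have "t \<in> W" using t E_t_subset[of W m] by blast
    ultimately show "t \<in> e"
      using chain_0_leftmost[OF t] left in_e e(1) by auto
  qed
  moreover have "chain ! j \<notin> E_t W m"
    using chain_0_leftmost[of "chain ! j"] left by auto
  ultimately have "m + 1 \<le> card (insert (chain ! j) (E_t W m))"
    and sub: "insert (chain ! j) (E_t W m) \<subseteq> e"
    using card_E_t_ge_if_hyperedge[OF finite_W assms(1)] finite_subset[OF E_t_subset finite_W] in_e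
    by simp_all
  then show False using card_le_if_subset_hyperedge[OF finite_W assms(1) sub] by simp
qed

lemma chain_Int_NE_empty:
  assumes "e \<in> hyperedges W (quad_fam NE) m" "e \<noteq> E_t W m"
  shows "set chain \<inter> e = {}"
proof -
  have "chain ! j \<notin> e" if "j < length chain" for j
    using chain_0_notin_NE_hyperedge[OF assms] chain_notin_NE_hyperedge[OF assms(1) _ that]
    by (cases j) auto
  then show ?thesis
    unfolding disjoint_iff in_set_conv_nth by blast
qed

lemma card_chain_Int_SW_le:
  assumes "e \<in> hyperedges W (quad_fam SW) m"
  shows "card (set chain \<inter> e) \<le> 1"
proof (rule card_chain_Int_le_1)
  obtain a b where e: "e = W \<inter> {p. fst p \<le> a \<and> snd p \<le> b}" "card e = m"
    using assms unfolding hyperedges_def by auto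
  fix i k assume ik: "i < k" "k < length chain" "chain ! i \<in> e" "chain ! k \<in> e"
  then have i: "Suc i < length chain" by simp
  let ?S = "{w \<in> W. fst (chain ! Suc i) \<le> fst w \<and> fst w \<le> fst (chain ! i) \<and> snd w \<le> snd (chain ! i)}"
  have "?S \<subseteq> e" using ik e by auto
  then have "card ?S \<le> m" by (rule card_le_if_subset_hyperedge[OF finite_W assms])
  then show False using card_strip_ge[OF i] by simp
qed

lemma card_chain_Int_SE_le:
  assumes "e \<in> hyperedges W (quad_fam SE) m"
  shows "card (set chain \<inter> e) \<le> 1"
proof (rule card_chain_Int_le_1)
  obtain a b where e: "e = W \<inter> {p. a \<le> fst p \<and> snd p \<le> b}" "card e = m"
    using assms unfolding hyperedges_def by auto
  fix i k assume ik: "i < k" "k < length chain" "chain ! i \<in> e" "chain ! k \<in> e"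
  then have i: "Suc i < length chain" by simp
  let ?S = "{w \<in> W. fst (chain ! Suc i) \<le> fst w \<and> fst w \<le> fst (chain ! i) \<and> snd w \<le> snd (chain ! i)}"
  have "fst (chain ! k) \<le> fst (chain ! Suc i)"
    using chain_antimono[of "Suc i" k] ik by simp
  then have "?S \<subseteq> e" using ik e by auto
  then have "card ?S \<le> m" by (rule card_le_if_subset_hyperedge[OF finite_W assms])
  then show False using card_strip_ge[OF i] by simp
qed

lemma card_chain_Int_E_b_le: "card (set chain \<inter> E_b W m) \<le> 1"
proof (rule card_chain_Int_le_1)
  fix i k assume ik: "i < k" "k < length chain" "chain ! i \<in> E_b W m"
  then have i: "Suc i < length chain" by simp
  have "tops (Suc i) \<subseteq> {q \<in> W. snd q < snd (chain ! i)}"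
    using tops_Suc_between[OF i] by blast
  then have "card (tops (Suc i)) \<le> card {q \<in> W. snd q < snd (chain ! i)}"
    using finite_W by (intro card_mono) auto
  then show False using card_tops_Suc[OF i] ik(3) unfolding E_b_def by simp
qed

lemma card_chain_Int_hyperedge_le:
  assumes "e \<in> hyperedges W (quad_fam C) m" "e \<noteq> extreme_points C W m"
  shows "card (set chain \<inter> e) \<le> chain_bound C"
  using assms card_chain_Int_NW_le chain_Int_NE_empty card_chain_Int_SW_le card_chain_Int_SE_le
  by (cases C) auto

lemma card_chain_Int_extreme_points_le: "card (set chain \<inter> extreme_points C W m) \<le> 1"
  using chain_Int_E_t card_chain_Int_E_b_le by (cases C) auto

end

section \<open>Reflections\<close>

lemma all_quadrant_iff: "(\<forall>A. P A) \<longleftrightarrow> P NW \<and> P NE \<and> P SW \<and> P SE"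
  by (metis quadrant.exhaust)

fun x_sign :: "quadrant \<Rightarrow> real" where
  "x_sign NW = 1" | "x_sign NE = -1" | "x_sign SW = 1" | "x_sign SE = -1"

fun y_sign :: "quadrant \<Rightarrow> real" where
  "y_sign NW = 1" | "y_sign NE = 1" | "y_sign SW = -1" | "y_sign SE = -1"

lemma x_sign_cancel [simp]: "x_sign A * (x_sign A * z) = z"
  and y_sign_cancel [simp]: "y_sign A * (y_sign A * z) = z"
  by (cases A; simp)+

fun quadrant_comp :: "quadrant \<Rightarrow> quadrant \<Rightarrow> quadrant" where
  "quadrant_comp NW B = B"
| "quadrant_comp NE NW = NE" | "quadrant_comp NE NE = NW"
| "quadrant_comp NE SW = SE" | "quadrant_comp NE SE = SW"
| "quadrant_comp SW NW = SW" | "quadrant_comp SW NE = SE"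
| "quadrant_comp SW SW = NW" | "quadrant_comp SW SE = NE"
| "quadrant_comp SE NW = SE" | "quadrant_comp SE NE = SW"
| "quadrant_comp SE SW = NE" | "quadrant_comp SE SE = NW"

lemma x_sign_comp: "x_sign (quadrant_comp A B) = x_sign A * x_sign B"
  and y_sign_comp: "y_sign (quadrant_comp A B) = y_sign A * y_sign B"
  by (cases A; cases B; simp)+

lemma sigma_eq: "sigma A p = (x_sign A * fst p, y_sign A * snd p)"
  by (cases A; cases p) simp_all

lemma sigma_sigma [simp]: "sigma A (sigma A p) = p"
  by (simp add: sigma_eq)

lemma inj_sigma: "inj (sigma A)"
  by (rule injI) (metis sigma_sigma)

lemma surj_sigma: "surj (sigma A)"
  by (metis surjI sigma_sigma)

lemma mem_image_sigma: "p \<in> sigma A ` X \<longleftrightarrow> sigma A p \<in> X"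
  by (metis image_iff sigma_sigma)

lemma image_sigma_image_sigma [simp]: "sigma A ` sigma A ` X = X"
  by (simp add: image_comp comp_def)

definition quadrant_at :: "quadrant \<Rightarrow> pt \<Rightarrow> pt set" where
  "quadrant_at A c =
     {p. x_sign A * fst p \<le> x_sign A * fst c \<and> y_sign A * snd c \<le> y_sign A * snd p}"

lemma quad_fam_eq_range: "quad_fam A = range (quadrant_at A)"
proof -
  have "quad_fam A = {quadrant_at A (a, b) | a b. True}"
    by (cases A) (simp_all add: quadrant_at_def)
  also have "\<dots> = range (quadrant_at A)"
    by auto
  finally show ?thesis .
qed

lemma image_sigma_quadrant_at:
  "sigma A ` quadrant_at B c = quadrant_at (quadrant_comp A B) (sigma A c)"
  by (rule set_eqI, unfold mem_image_sigma)
    (simp add: quadrant_at_def sigma_eq x_sign_comp y_sign_comp ac_simps)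

lemma image_sigma_quad_fam: "(`) (sigma A) ` quad_fam B = quad_fam (quadrant_comp A B)"
proof -
  have "(`) (sigma A) ` quad_fam B = quadrant_at (quadrant_comp A B) ` range (sigma A)"
    unfolding quad_fam_eq_range image_image image_sigma_quadrant_at by (simp add: image_comp)
  then show ?thesis
    unfolding quad_fam_eq_range surj_sigma .
qed

lemma hyperedges_image:
  assumes "inj f"
  shows "hyperedges (f ` V) ((`) f ` Rs) m = (`) f ` hyperedges V Rs m"
proof (rule set_eqI)
  fix X
  have "X \<in> hyperedges (f ` V) ((`) f ` Rs) m \<longleftrightarrow>
      (\<exists>R \<in> Rs. X = f ` V \<inter> f ` R \<and> card (f ` V \<inter> f ` R) = m)"
    unfolding hyperedges_def by auto
  also have "\<dots> \<longleftrightarrow> (\<exists>R \<in> Rs. X = f ` (V \<inter> R) \<and> card (V \<inter> R) = m)"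
    by (simp add: image_Int[OF assms, symmetric] card_image[OF inj_on_subset[OF assms subset_UNIV]])
  also have "\<dots> \<longleftrightarrow> X \<in> (`) f ` hyperedges V Rs m"
    unfolding hyperedges_def by auto
  finally show "X \<in> hyperedges (f ` V) ((`) f ` Rs) m \<longleftrightarrow> X \<in> (`) f ` hyperedges V Rs m" .
qed

lemma image_Collect_card_less:
  assumes "inj f"
  shows "{q \<in> f ` V. card {r \<in> f ` V. R q r} < m} = f ` {p \<in> V. card {r \<in> V. R (f p) (f r)} < m}"
proof -
  have "card {r \<in> f ` V. R (f p) r} = card {r \<in> V. R (f p) (f r)}" for p
  proof -
    have "{r \<in> f ` V. R (f p) r} = f ` {r \<in> V. R (f p) (f r)}" by auto
    then show ?thesis using card_image[OF inj_on_subset[OF assms subset_UNIV]] by simp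
  qed
  then show ?thesis by auto
qed

lemma E_t_image_sigma: "E_t (sigma A ` V) m = sigma A ` (if y_sign A = 1 then E_t V m else E_b V m)"
proof -
  have "E_t (sigma A ` V) m =
      sigma A ` {p \<in> V. card {r \<in> V. y_sign A * snd p < y_sign A * snd r} < m}"
    unfolding E_t_def image_Collect_card_less[OF inj_sigma] by (simp add: sigma_eq)
  then show ?thesis
    by (cases A) (simp_all add: E_t_def E_b_def)
qed

lemma E_b_image_sigma: "E_b (sigma A ` V) m = sigma A ` (if y_sign A = 1 then E_b V m else E_t V m)"
proof -
  have "E_b (sigma A ` V) m =
      sigma A ` {p \<in> V. card {r \<in> V. y_sign A * snd r < y_sign A * snd p} < m}"
    unfolding E_b_def image_Collect_card_less[OF inj_sigma] by (simp add: sigma_eq)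
  then show ?thesis
    by (cases A) (simp_all add: E_t_def E_b_def)
qed

lemma image_sigma_extreme_points:
  "sigma A ` extreme_points B V m = extreme_points (quadrant_comp A B) (sigma A ` V) m"
  by (cases A; cases B) (simp_all add: E_t_image_sigma E_b_image_sigma)

lemma card_Int_image_sigma: "card (X \<inter> sigma A ` Y) = card (sigma A ` X \<inter> Y)"
proof -
  have "card (X \<inter> sigma A ` Y) = card (sigma A ` (X \<inter> sigma A ` Y))"
    by (rule card_image[symmetric]) (rule inj_on_subset[OF inj_sigma subset_UNIV])
  also have "sigma A ` (X \<inter> sigma A ` Y) = sigma A ` X \<inter> Y"
    by (simp add: image_Int[OF inj_sigma])
  finally show ?thesis .
qed

definition reflected_chain :: "nat \<Rightarrow> quadrant \<Rightarrow> pt set \<Rightarrow> pt set" where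
  "reflected_chain m A V = sigma A ` set (greedy_chain m (sigma A ` V))"

lemma greedy_chain_of_image_sigma:
  "finite V \<Longrightarrow> V \<noteq> {} \<Longrightarrow> 0 < m \<Longrightarrow> greedy_chain_of (sigma A ` V) m"
  by unfold_locales auto

lemma hyperedge_image_sigma:
  "E \<in> hyperedges V (quad_fam B) m \<Longrightarrow>
     sigma A ` E \<in> hyperedges (sigma A ` V) (quad_fam (quadrant_comp A B)) m"
  by (simp add: image_sigma_quad_fam[symmetric] hyperedges_image[OF inj_sigma])

lemma card_Int_reflected_chain_le:
  assumes "finite V" "V \<noteq> {}" "0 < m"
    and "E \<in> hyperedges V (quad_fam B) m" "E \<noteq> extreme_points B V m"
  shows "card (E \<inter> reflected_chain m A V) \<le> chain_bound (quadrant_comp A B)"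
proof -
  interpret greedy_chain_of "sigma A ` V" m
    using assms(1-3) by (rule greedy_chain_of_image_sigma)
  have "sigma A ` E \<noteq> sigma A ` extreme_points B V m"
    using assms(5) inj_image_eq_iff[OF inj_sigma] by simp
  then have "sigma A ` E \<noteq> extreme_points (quadrant_comp A B) (sigma A ` V) m"
    unfolding image_sigma_extreme_points .
  then have "card (set chain \<inter> sigma A ` E) \<le> chain_bound (quadrant_comp A B)"
    using card_chain_Int_hyperedge_le hyperedge_image_sigma[OF assms(4)] by blast
  moreover have "card (E \<inter> reflected_chain m A V) = card (sigma A ` E \<inter> set chain)"
    unfolding reflected_chain_def by (rule card_Int_image_sigma)
  ultimately show ?thesis
    by (simp add: Int_commute)
qed

lemma card_extreme_points_Int_reflected_chain_le:
  assumes "finite V" "V \<noteq> {}" "0 < m"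
  shows "card (extreme_points B V m \<inter> reflected_chain m A V) \<le> 1"
proof -
  interpret greedy_chain_of "sigma A ` V" m
    using assms by (rule greedy_chain_of_image_sigma)
  show ?thesis
    using card_chain_Int_extreme_points_le[of "quadrant_comp A B"]
    unfolding reflected_chain_def card_Int_image_sigma image_sigma_extreme_points
    by (simp add: Int_commute)
qed

lemma hitting_set_reflected_chain:
  assumes "finite V" "V \<noteq> {}" "0 < m"
  shows "hitting_set V (hyperedges V (quad_fam A) m) (reflected_chain m A V)"
proof -
  interpret greedy_chain_of "sigma A ` V" m
    using assms by (rule greedy_chain_of_image_sigma)
  have "reflected_chain m A V \<inter> E \<noteq> {}" if "E \<in> hyperedges V (quad_fam A) m" for E
  proof -
    have "quadrant_comp A A = NW" by (cases A) simp_all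
    then have "sigma A ` E \<in> hyperedges (sigma A ` V) (quad_fam NW) m"
      using hyperedge_image_sigma[OF that, of A] by simp
    from chain_hits_NW[OF this] obtain q where q: "q \<in> E" "sigma A q \<in> set chain"
      by blast
    then have "q \<in> reflected_chain m A V"
      unfolding reflected_chain_def mem_image_sigma by simp
    with q(1) show ?thesis by blast
  qed
  moreover have "reflected_chain m A V \<subseteq> V"
    using image_mono[OF chain_subset, of "sigma A"] unfolding reflected_chain_def by simp
  ultimately show ?thesis
    unfolding hitting_set_def by blast
qed

lemma reflected_chain_normalized:
  assumes "finite V" "V \<noteq> {}" "0 < m"
  shows "shallow_hitting_set 2 (sigma A ` V) (hyperedges (sigma A ` V) (quad_fam NW) m)
           (sigma A ` reflected_chain m A V)
         \<and> props_P m (sigma A ` V) (sigma A ` reflected_chain m A V)"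
proof -
  interpret greedy_chain_of "sigma A ` V" m
    using assms by (rule greedy_chain_of_image_sigma)
  show ?thesis
    unfolding reflected_chain_def image_sigma_image_sigma
    using chain_shallow_hitting_set chain_props_P by simp
qed

theorem corollary15:
  fixes V :: "(real \<times> real) set" and m :: nat
  assumes "finite V" and "V \<noteq> {}" and "general_position V" and "m \<ge> 1"
  shows "\<exists>S :: quadrant \<Rightarrow> (real \<times> real) set.
    (\<forall>A. hitting_set V (hyperedges V (quad_fam A) m) (S A)) \<and>
    (\<forall>A. shallow_hitting_set 2 (sigma A ` V) (hyperedges (sigma A ` V) (quad_fam NW) m)
            (sigma A ` S A)
         \<and> props_P m (sigma A ` V) (sigma A ` S A)) \<and>
    (\<forall>E \<in> hyperedges V (quad_fam NW) m. E \<noteq> E_t V m \<longrightarrow>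
       card (E \<inter> S NW) \<le> 2 \<and> card (E \<inter> S NE) \<le> 0 \<and> card (E \<inter> S SW) \<le> 1 \<and> card (E \<inter> S SE) \<le> 1) \<and>
    (\<forall>E \<in> hyperedges V (quad_fam NE) m. E \<noteq> E_t V m \<longrightarrow>
       card (E \<inter> S NW) \<le> 0 \<and> card (E \<inter> S NE) \<le> 2 \<and> card (E \<inter> S SW) \<le> 1 \<and> card (E \<inter> S SE) \<le> 1) \<and>
    (\<forall>E \<in> hyperedges V (quad_fam SW) m. E \<noteq> E_b V m \<longrightarrow>
       card (E \<inter> S NW) \<le> 1 \<and> card (E \<inter> S NE) \<le> 1 \<and> card (E \<inter> S SW) \<le> 2 \<and> card (E \<inter> S SE) \<le> 0) \<and>
    (\<forall>E \<in> hyperedges V (quad_fam SE) m. E \<noteq> E_b V m \<longrightarrow>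
       card (E \<inter> S NW) \<le> 1 \<and> card (E \<inter> S NE) \<le> 1 \<and> card (E \<inter> S SW) \<le> 0 \<and> card (E \<inter> S SE) \<le> 2) \<and>
    (\<forall>A. card (E_t V m \<inter> S A) \<le> 1) \<and>
    (\<forall>A. card (E_b V m \<inter> S A) \<le> 1)"
proof -
  have m: "0 < m" using \<open>m \<ge> 1\<close> by simp
  let ?S = "\<lambda>A. reflected_chain m A V"
  have bound: "\<forall>A. card (E \<inter> ?S A) \<le> chain_bound (quadrant_comp A B)"
    if "E \<in> hyperedges V (quad_fam B) m" "E \<noteq> extreme_points B V m" for B E
    using card_Int_reflected_chain_le[OF assms(1,2) m that] by blast
  have extreme: "\<forall>A. card (extreme_points B V m \<inter> ?S A) \<le> 1" for B
    using card_extreme_points_Int_reflected_chain_le[OF assms(1,2) m] by blast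
  have "\<forall>A. hitting_set V (hyperedges V (quad_fam A) m) (?S A)"
    using hitting_set_reflected_chain[OF assms(1,2) m] by blast
  moreover have "\<forall>A. shallow_hitting_set 2 (sigma A ` V) (hyperedges (sigma A ` V) (quad_fam NW) m)
      (sigma A ` ?S A) \<and> props_P m (sigma A ` V) (sigma A ` ?S A)"
    using reflected_chain_normalized[OF assms(1,2) m] by blast
  moreover note extreme[of NW] extreme[of SW]
    bound[where B = NW] bound[where B = NE] bound[where B = SW] bound[where B = SE]
  ultimately show ?thesis
    by (intro exI[of _ ?S]) (simp add: all_quadrant_iff)
qed

end
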